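(* Let receiver $1$ belong to session $h$, and suppose session $h$'s packets are delivered by a static channel allocation or by a genie-aided dynamic channel allocation without merging, so that receiver 1 can successfully receive at most one packet of session $h$ per time slot. Then the decay rate of its delay violation probability satisfies $$\limsup_{k\to\infty}\Big(-\frac1k\log\mathbb{P}(D_1\ge k)\Big)\le\sup\Big\{\theta>0:\log\mathbb{E}\big[e^{\theta a_h[t]}\big]<\theta\Big\}.$$ In particular this upper bound depends only on the distribution of $a_h[t]$ and not on the number of channels $m$, and it is finite whenever $\mathbb{P}(a_h[t]>1)>0$.
   Context: Time is slotted. Packets of session $h$ arrive at the transmitter in amounts $a_h[t]\in\{0,1,2,\dots\}$ per slot, i.i.d. across slots with mean $\lambda<1$. A packet of session $h$ is considered decoded by receiver 1 only when it and all packets of session $h$ with smaller index have been decoded; the delay of a packet is the number of slots from its arrival until it is decoded. $\mathbb{P}(D_1\ge k)$ denotes the almost-sure long-run fraction, among all arriving packets of session $h$, of those whose delay at receiver 1 is at least $k$. In a static channel allocation each session is served on a fixed channel; in the genie-aided dynamic allocation channels may be reassigned among sessions each slot using full channel knowledge, but (without merging of sessions) each receiver still receives at most one packet of its session per slot. *)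

theory Defs
  imports "HOL-Probability.Probability"
begin

text \<open>Arrivals of session h: a t w = number of packets arriving in slot t.
  Packets are indexed 0,1,2,... in order of arrival.\<close>

definition cum_arr :: "(nat \<Rightarrow> 'w \<Rightarrow> nat) \<Rightarrow> nat \<Rightarrow> 'w \<Rightarrow> nat" where
  "cum_arr a t w = (\<Sum>s<t. a s w)"

definition arr_slot :: "(nat \<Rightarrow> 'w \<Rightarrow> nat) \<Rightarrow> nat \<Rightarrow> 'w \<Rightarrow> nat" where
  "arr_slot a n w = (LEAST t. n < cum_arr a (Suc t) w)"

text \<open>r t w = Some j : receiver 1 successfully receives packet j of session h
  in slot t (at most one packet per slot); None : nothing received.\<close>
definition decoded_by :: "(nat \<Rightarrow> 'w \<Rightarrow> nat option) \<Rightarrow> nat \<Rightarrow> nat \<Rightarrow> 'w \<Rightarrow> bool" where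
  "decoded_by r n t w = (\<forall>j\<le>n. \<exists>s\<le>t. r s w = Some j)"

definition delay_ge :: "(nat \<Rightarrow> 'w \<Rightarrow> nat) \<Rightarrow> (nat \<Rightarrow> 'w \<Rightarrow> nat option) \<Rightarrow> nat \<Rightarrow> nat \<Rightarrow> 'w \<Rightarrow> bool" where
  "delay_ge a r k n w = (\<forall>t. t < arr_slot a n w + k \<longrightarrow> \<not> decoded_by r n t w)"

definition ereal_ln :: "ennreal \<Rightarrow> ereal" where
  "ereal_ln x = (if x = \<infinity> then \<infinity> else if x = 0 then -\<infinity> else ereal (ln (enn2real x)))"

definition decay :: "real \<Rightarrow> nat \<Rightarrow> ereal" where
  "decay p k = (if p \<le> 0 then \<infinity> else ereal (- ln p / real k))"

end

theory Submission
  imports Defs "HOL-Real_Asymp.Real_Asymp"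
begin

text \<open>Receiver 1 clears at most one packet of the session per slot, so whenever the arrivals of
  m consecutive slots exceed m + k, some packet of that burst has delay at least k. The backlog
  therefore dominates a random walk with increments a[t] - 1. If th lies beyond the claimed
  supremum, then E exp(th (a - 1)) > 1 and exp(th S_t) is a submartingale, while the negative drift
  (lambda < 1) yields th' with E exp(th' (a - 1)) < 1. Optional stopping of the walk with arrivals
  truncated at B then shows that level k is reached within n = O(k) slots with probability of order
  exp(-th (k + B)). Running this in disjoint windows of n slots, with a Markov bound ensuring that the
  windows' packets arrive early enough, and passing to the long-run fraction by Fatou's lemma, gives
  P(D >= k) >= c exp(-th k) / k, i.e. a decay rate at most th. Finiteness of the bound follows from
  E exp(th a) >= exp(2 th) P(a > 1).\<close>

section \<open>First passage of the backlog walk\<close>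

fun first_passage :: "int \<Rightarrow> int \<Rightarrow> nat list \<Rightarrow> bool" where
  "first_passage k s [] = False"
| "first_passage k s (v # xs) =
     (if k \<le> s + int v - 1 then xs = [] else first_passage k (s + int v - 1) xs)"

definition passage_paths :: "nat \<Rightarrow> int \<Rightarrow> nat \<Rightarrow> int \<Rightarrow> nat list set" where
  "passage_paths B k n s = {xs. set xs \<subseteq> {..B} \<and> length xs \<le> n \<and> first_passage k s xs}"

text \<open>For a walk from s with increments v - 1, v drawn from the weights mu on {..B}:
  the probability of reaching level k within n steps, and E[exp(th S_n); k not reached].\<close>

fun passage_prob :: "(nat \<Rightarrow> real) \<Rightarrow> nat \<Rightarrow> int \<Rightarrow> nat \<Rightarrow> int \<Rightarrow> real" where
  "passage_prob mu B k 0 s = 0"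
| "passage_prob mu B k (Suc n) s = (\<Sum>v\<le>B. mu v *
     (if k \<le> s + int v - 1 then 1 else passage_prob mu B k n (s + int v - 1)))"

fun survival_moment :: "(nat \<Rightarrow> real) \<Rightarrow> nat \<Rightarrow> int \<Rightarrow> real \<Rightarrow> nat \<Rightarrow> int \<Rightarrow> real" where
  "survival_moment mu B k th 0 s = exp (th * s)"
| "survival_moment mu B k th (Suc n) s = (\<Sum>v\<le>B. mu v *
     (if k \<le> s + int v - 1 then 0 else survival_moment mu B k th n (s + int v - 1)))"

lemma first_passage_level:
  "first_passage k s xs \<Longrightarrow> k \<le> s + int (sum_list xs) - int (length xs)"
  by (induction xs arbitrary: s) (auto split: if_splits, fastforce)

lemma first_passage_append_eq_Nil:
  "first_passage k s xs \<Longrightarrow> first_passage k s (xs @ ys) \<Longrightarrow> ys = []"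
  by (induction xs arbitrary: s) (auto split: if_splits)

lemma finite_passage_paths: "finite (passage_paths B k n s)"
proof (rule finite_subset)
  show "passage_paths B k n s \<subseteq> {xs. set xs \<subseteq> {..B} \<and> length xs \<le> n}"
    by (auto simp: passage_paths_def)
  show "finite {xs. set xs \<subseteq> {..B} \<and> length xs \<le> n}"
    by (rule finite_lists_length_le) auto
qed

lemma passage_paths_Suc: "passage_paths B k (Suc n) s =
   (\<Union>v\<in>{..B}. (#) v ` (if k \<le> s + int v - 1 then {[]} else passage_paths B k n (s + int v - 1)))"
proof (intro equalityI subsetI)
  fix xs assume "xs \<in> passage_paths B k (Suc n) s"
  then show "xs \<in> (\<Union>v\<in>{..B}. (#) v ` (if k \<le> s + int v - 1 then {[]}
                                       else passage_paths B k n (s + int v - 1)))"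
    by (cases xs) (auto simp: passage_paths_def split: if_splits)
qed (auto simp: passage_paths_def split: if_splits)

lemma passage_prob_eq_sum_paths:
  "passage_prob mu B k n s = (\<Sum>xs\<in>passage_paths B k n s. prod_list (map mu xs))"
proof (induction n arbitrary: s)
  case 0
  then show ?case by (simp add: passage_paths_def)
next
  case (Suc n)
  let ?S = "\<lambda>v. if k \<le> s + int v - 1 then {[]} else passage_paths B k n (s + int v - 1)"
  have "(\<Sum>xs\<in>passage_paths B k (Suc n) s. prod_list (map mu xs)) =
        (\<Sum>v\<le>B. \<Sum>xs\<in>(#) v ` ?S v. prod_list (map mu xs))"
    unfolding passage_paths_Suc by (rule sum.UNION_disjoint) (auto simp: finite_passage_paths)
  also have "\<dots> = (\<Sum>v\<le>B. \<Sum>xs\<in>?S v. mu v * prod_list (map mu xs))"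
    by (rule sum.cong[OF refl], subst sum.reindex) (auto simp: inj_on_def)
  also have "\<dots> = passage_prob mu B k (Suc n) s"
    by (auto intro!: sum.cong simp: sum_distrib_left[symmetric] Suc.IH)
  finally show ?case ..
qed

lemma passage_prob_nonneg: "(\<And>v. 0 \<le> mu v) \<Longrightarrow> 0 \<le> passage_prob mu B k n s"
  unfolding passage_prob_eq_sum_paths by (intro sum_nonneg prod_list_nonneg) auto

text \<open>Optional stopping for the submartingale exp(th S_t): the walk overshoots level k by at
  most B, so exp(th S) is at most exp(th (k + B)) on the event of passage.\<close>

lemma exp_le_passage_prob_plus_survival_moment:
  assumes mu: "\<And>v. 0 \<le> mu v" and th: "0 \<le> th"
    and submart: "1 \<le> (\<Sum>v\<le>B. mu v * exp (th * (real v - 1)))"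
    and "s < k"
  shows "exp (th * s) \<le>
    exp (th * real_of_int (k + int B)) * passage_prob mu B k n s + survival_moment mu B k th n s"
  using \<open>s < k\<close>
proof (induction n arbitrary: s)
  case (Suc n)
  let ?E = "exp (th * real_of_int (k + int B))"
  have "exp (th * s) \<le> exp (th * s) * (\<Sum>v\<le>B. mu v * exp (th * (real v - 1)))"
    using submart by simp
  also have "\<dots> = (\<Sum>v\<le>B. mu v * exp (th * (s + int v - 1)))"
    by (simp add: sum_distrib_left algebra_simps flip: exp_add)
  also have "\<dots> \<le> (\<Sum>v\<le>B. mu v * (if k \<le> s + int v - 1 then ?E
        else ?E * passage_prob mu B k n (s + int v - 1) + survival_moment mu B k th n (s + int v - 1)))"
  proof (rule sum_mono)
    fix v assume v: "v \<in> {..B}"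
    show "mu v * exp (th * (s + int v - 1)) \<le> mu v * (if k \<le> s + int v - 1 then ?E
        else ?E * passage_prob mu B k n (s + int v - 1) + survival_moment mu B k th n (s + int v - 1))"
    proof (cases "k \<le> s + int v - 1")
      case True
      have "s + int v - 1 \<le> k + B" using v Suc.prems by auto
      then have "th * real_of_int (s + int v - 1) \<le> th * real_of_int (k + int B)"
        using th by (intro mult_left_mono) linarith+
      then show ?thesis using True mu[of v] by (auto intro!: mult_left_mono)
    next
      case False
      then show ?thesis using Suc.IH[of "s + int v - 1"] mu[of v] by (auto intro!: mult_left_mono)
    qed
  qed
  also have "\<dots> = ?E * passage_prob mu B k (Suc n) s + survival_moment mu B k th (Suc n) s"
    by (simp add: sum_distrib_left sum.distrib[symmetric] algebra_simps if_distrib cong: if_cong)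
  finally show ?case .
qed simp

lemma survival_moment_le:
  assumes mu: "\<And>v. 0 \<le> mu v" and th: "0 \<le> th'" "th' \<le> th" and "s < k"
  shows "survival_moment mu B k th n s \<le>
    exp ((th - th') * k) * exp (th' * s) * (\<Sum>v\<le>B. mu v * exp (th' * (real v - 1))) ^ n"
  using \<open>s < k\<close>
proof (induction n arbitrary: s)
  case 0
  have "(th - th') * s \<le> (th - th') * k" using th 0 by (intro mult_left_mono) auto
  then show ?case by (simp add: algebra_simps flip: exp_add)
next
  case (Suc n)
  let ?C = "exp ((th - th') * k)" and ?p = "\<Sum>v\<le>B. mu v * exp (th' * (real v - 1))"
  have p: "0 \<le> ?p" using mu by (intro sum_nonneg) auto
  have "survival_moment mu B k th (Suc n) s \<le> (\<Sum>v\<le>B. mu v * (?C * exp (th' * (s + int v - 1)) * ?p ^ n))"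
    unfolding survival_moment.simps
  proof (intro sum_mono mult_left_mono)
    fix v
    show "(if k \<le> s + int v - 1 then 0 else survival_moment mu B k th n (s + int v - 1))
        \<le> ?C * exp (th' * (s + int v - 1)) * ?p ^ n"
      using Suc.IH[of "s + int v - 1"] p by auto
  qed (rule mu)
  also have "\<dots> = (\<Sum>v\<le>B. (?C * exp (th' * s) * ?p ^ n) * (mu v * exp (th' * (real v - 1))))"
    by (intro sum.cong refl) (simp add: algebra_simps flip: exp_add)
  also have "\<dots> = ?C * exp (th' * s) * ?p ^ Suc n"
    by (simp add: sum_distrib_left[symmetric])
  finally show ?case .
qed

section \<open>I.i.d. arrivals\<close>

definition lists_sum_le :: "nat \<Rightarrow> nat \<Rightarrow> nat list set" where
  "lists_sum_le L c = {y. set y \<subseteq> {..c} \<and> length y = L \<and> sum_list y \<le> c}"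

lemma finite_lists_sum_le: "finite (lists_sum_le L c)"
  unfolding lists_sum_le_def
  by (rule finite_subset[OF _ finite_lists_length_eq[of "{..c}" L]]) auto

locale iid_arrivals = prob_space M for M :: "'w measure" +
  fixes a :: "nat \<Rightarrow> 'w \<Rightarrow> nat"
  assumes measurable_a[measurable]: "\<And>t. a t \<in> measurable M (count_space UNIV)"
    and indep_a: "indep_vars (\<lambda>_. count_space UNIV) a UNIV"
    and distr_a: "\<And>t. distr M (count_space UNIV) (a t) = distr M (count_space UNIV) (a 0)"
begin

definition mu :: "nat \<Rightarrow> real" where "mu v = prob {w \<in> space M. a 0 w = v}"

definition cylinder :: "nat list \<Rightarrow> 'w set" where
  "cylinder z = {w \<in> space M. \<forall>j<length z. a j w = z ! j}"

lemma mu_nonneg: "0 \<le> mu v"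
  by (simp add: mu_def)

lemma measurable_cum_arr[measurable]: "cum_arr a L \<in> measurable M (count_space UNIV)"
  unfolding cum_arr_def by measurable

lemma sets_cylinder[measurable]: "cylinder z \<in> sets M"
  unfolding cylinder_def by measurable

lemma prob_a_eq_mu: "prob {w \<in> space M. a t w = v} = mu v"
proof -
  have "prob {w \<in> space M. a t w = v} = measure (distr M (count_space UNIV) (a t)) {v}"
    by (subst measure_distr) (auto simp: vimage_def Int_def conj_commute)
  also have "\<dots> = measure (distr M (count_space UNIV) (a 0)) {v}"
    by (simp add: distr_a[of t])
  also have "\<dots> = mu v"
    by (subst measure_distr) (auto simp: mu_def vimage_def Int_def conj_commute)
  finally show ?thesis .
qed

lemma nn_integral_a_eq: "(\<integral>\<^sup>+ w. f (a t w) \<partial>M) = (\<integral>\<^sup>+ w. f (a 0 w) \<partial>M)"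
proof -
  have "(\<integral>\<^sup>+ w. f (a t w) \<partial>M) = (\<integral>\<^sup>+ x. f x \<partial>distr M (count_space UNIV) (a t))"
    by (rule nn_integral_distr[symmetric]) auto
  also have "\<dots> = (\<integral>\<^sup>+ w. f (a 0 w) \<partial>M)"
    by (simp add: distr_a[of t] nn_integral_distr)
  finally show ?thesis .
qed

lemma prob_cylinder: "prob (cylinder z) = prod_list (map mu z)"
proof (cases "z = []")
  case True
  then show ?thesis by (simp add: cylinder_def prob_space)
next
  case False
  have "cylinder z = (\<Inter>j<length z. a j -` {z ! j} \<inter> space M)"
    using False by (auto simp: cylinder_def)
  moreover have "prob (\<Inter>j<length z. a j -` {z ! j} \<inter> space M) =
      (\<Prod>j<length z. prob (a j -` {z ! j} \<inter> space M))"
    by (rule indep_varsD[OF indep_a]) (use False in auto)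
  ultimately have "prob (cylinder z) = (\<Prod>j<length z. prob (a j -` {z ! j} \<inter> space M))"
    by simp
  also have "\<dots> = (\<Prod>j<length z. mu (z ! j))"
    by (intro prod.cong refl) (simp add: vimage_def Int_def conj_commute prob_a_eq_mu)
  finally show ?thesis by (simp add: prod.list_conv_set_nth atLeast0LessThan)
qed

lemma cylinder_prefix:
  assumes "w \<in> cylinder z" "w \<in> cylinder z'" "length z \<le> length z'"
  shows "take (length z) z' = z"
  using assms by (intro nth_equalityI) (auto simp: cylinder_def)

lemma cum_arr_cylinder: "w \<in> cylinder y \<Longrightarrow> cum_arr a (length y) w = sum_list y"
  by (simp add: cum_arr_def cylinder_def sum_list_sum_nth atLeast0LessThan)

lemma cylinder_append_inject:
  assumes w: "w \<in> cylinder (y @ x)" "w \<in> cylinder (y' @ x')" and len: "length y = length y'"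
    and passage: "first_passage k s x" "first_passage k s x'"
  shows "y = y' \<and> x = x'"
proof -
  have "take (length (y' @ x')) (y @ x) = y' @ x' \<or> take (length (y @ x)) (y' @ x') = y @ x"
    using cylinder_prefix[OF w] cylinder_prefix[OF w(2,1)] by (meson nat_le_linear)
  then have y: "y = y'" and "take (length x') x = x' \<or> take (length x) x' = x"
    using len by (auto dest: arg_cong[where f = "take (length y)"])
  then have "x = x' @ drop (length x') x \<or> x' = x @ drop (length x) x'"
    by (metis append_take_drop_id)
  then show ?thesis
    using y passage first_passage_append_eq_Nil by (metis append_Nil2)
qed

lemma prob_Union_cylinder_append:
  assumes Y: "finite Y" "\<And>y. y \<in> Y \<Longrightarrow> length y = L"
    and X: "finite X" "\<And>x. x \<in> X \<Longrightarrow> first_passage k s x"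
  shows "prob (\<Union>(y, x)\<in>Y \<times> X. cylinder (y @ x)) =
     (\<Sum>y\<in>Y. prod_list (map mu y)) * (\<Sum>x\<in>X. prod_list (map mu x))"
proof -
  have "disjoint_family_on (\<lambda>(y, x). cylinder (y @ x)) (Y \<times> X)"
    unfolding disjoint_family_on_def
  proof (intro ballI impI equalityI subsetI)
    fix p q w assume "p \<in> Y \<times> X" "q \<in> Y \<times> X" "p \<noteq> q"
      and "w \<in> (\<lambda>(y, x). cylinder (y @ x)) p \<inter> (\<lambda>(y, x). cylinder (y @ x)) q"
    then show "w \<in> {}"
      using cylinder_append_inject[of w "fst p" "snd p" "fst q" "snd q" k s] Y X
      by (auto simp: split_beta prod_eq_iff)
  qed auto
  then have "prob (\<Union>(y, x)\<in>Y \<times> X. cylinder (y @ x)) =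
      (\<Sum>p\<in>Y \<times> X. prob ((\<lambda>(y, x). cylinder (y @ x)) p))"
    using Y X by (intro finite_measure_finite_Union) auto
  then show ?thesis
    by (simp add: prob_cylinder sum_product sum.cartesian_product split_beta)
qed

lemma prob_cum_arr_le:
  "prob {w \<in> space M. cum_arr a L w \<le> c} = (\<Sum>y\<in>lists_sum_le L c. prod_list (map mu y))"
proof -
  have eq: "{w \<in> space M. cum_arr a L w \<le> c} = (\<Union>y\<in>lists_sum_le L c. cylinder y)"
  proof (intro equalityI subsetI)
    fix w assume w: "w \<in> {w \<in> space M. cum_arr a L w \<le> c}"
    let ?y = "map (\<lambda>j. a j w) [0..<L]"
    have wc: "w \<in> cylinder ?y" using w by (auto simp: cylinder_def)
    have "sum_list ?y \<le> c" using cum_arr_cylinder[OF wc] w by simp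
    moreover have "v \<le> sum_list ?y" if "v \<in> set ?y" for v
      using that by (auto intro: member_le_sum_list)
    ultimately have "?y \<in> lists_sum_le L c"
      unfolding lists_sum_le_def by fastforce
    then show "w \<in> (\<Union>y\<in>lists_sum_le L c. cylinder y)" using wc by blast
  qed (auto simp: lists_sum_le_def cum_arr_cylinder cylinder_def[of _])
  have "disjoint_family_on cylinder (lists_sum_le L c)"
    unfolding disjoint_family_on_def
  proof (intro ballI impI equalityI subsetI)
    fix y y' w assume "y \<in> lists_sum_le L c" "y' \<in> lists_sum_le L c" "y \<noteq> y'"
      and "w \<in> cylinder y \<inter> cylinder y'"
    then show "w \<in> {}" using cylinder_prefix[of w y y'] by (auto simp: lists_sum_le_def)
  qed auto
  then have "prob (\<Union>y\<in>lists_sum_le L c. cylinder y) = (\<Sum>y\<in>lists_sum_le L c. prob (cylinder y))"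
    by (intro finite_measure_finite_Union finite_lists_sum_le) auto
  then show ?thesis using eq by (simp add: prob_cylinder)
qed

lemma nn_integral_eq_suminf_mu:
  assumes f: "\<And>v. 0 \<le> f v"
  shows "(\<integral>\<^sup>+ w. ennreal (f (a 0 w)) \<partial>M) = (\<Sum>v. ennreal (f v * mu v))"
proof -
  let ?A = "\<lambda>v. {w \<in> space M. a 0 w = v}"
  have "(\<integral>\<^sup>+ w. ennreal (f (a 0 w)) \<partial>M) = (\<integral>\<^sup>+ w. (\<Sum>v. ennreal (f v) * indicator (?A v) w) \<partial>M)"
  proof (rule nn_integral_cong)
    fix w assume w: "w \<in> space M"
    have "(\<lambda>v. ennreal (f v) * indicator (?A v) w) = (\<lambda>v. if v = a 0 w then ennreal (f v) else 0)"
      using w by (auto simp: indicator_def)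
    then show "ennreal (f (a 0 w)) = (\<Sum>v. ennreal (f v) * indicator (?A v) w)"
      using sums_single[of "a 0 w" "\<lambda>v. ennreal (f v)"] by (simp add: sums_iff)
  qed
  also have "\<dots> = (\<Sum>v. (\<integral>\<^sup>+ w. ennreal (f v) * indicator (?A v) w \<partial>M))"
    by (rule nn_integral_suminf) measurable
  also have "\<dots> = (\<Sum>v. ennreal (f v * mu v))"
    by (intro suminf_cong) (simp add: nn_integral_cmult_indicator emeasure_eq_measure mu_def ennreal_mult f)
  finally show ?thesis .
qed

lemma sums_mu_if_nn_integral_eq:
  assumes f: "\<And>v. 0 \<le> f v" and c: "0 \<le> c"
    and int: "(\<integral>\<^sup>+ w. ennreal (f (a 0 w)) \<partial>M) = ennreal c"
  shows "(\<lambda>v. f v * mu v) sums c"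
proof -
  have e: "(\<Sum>v. ennreal (f v * mu v)) = ennreal c"
    using nn_integral_eq_suminf_mu[of f] f int by simp
  have s: "summable (\<lambda>v. f v * mu v)"
    using e by (intro summable_suminf_not_top) (auto simp: mu_nonneg f)
  have "(\<Sum>v. ennreal (f v * mu v)) = ennreal (\<Sum>v. f v * mu v)"
    by (rule suminf_ennreal2[OF _ s]) (simp add: mu_nonneg f)
  then have "ennreal (\<Sum>v. f v * mu v) = ennreal c" using e by simp
  moreover have "0 \<le> (\<Sum>v. f v * mu v)" using s by (intro suminf_nonneg) (auto simp: mu_nonneg f)
  ultimately have "(\<Sum>v. f v * mu v) = c" using c by (subst (asm) ennreal_inj) auto
  then show ?thesis using s by (simp add: sums_iff)
qed

lemma mu_sums: "mu sums 1"
  using sums_mu_if_nn_integral_eq[of "\<lambda>_. 1" 1] by (simp add: emeasure_space_1)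

end

locale stable_arrivals = iid_arrivals M a for M :: "'w measure" and a +
  assumes mean_less_1: "(\<integral>\<^sup>+ w. ennreal (real (a 0 w)) \<partial>M) < 1"
begin

definition lam :: real where "lam = enn2real (\<integral>\<^sup>+ w. ennreal (real (a 0 w)) \<partial>M)"

lemma nn_integral_eq_lam: "(\<integral>\<^sup>+ w. ennreal (real (a 0 w)) \<partial>M) = ennreal lam"
  using mean_less_1 ennreal_one_less_top unfolding lam_def
  by (metis ennreal_enn2real less_trans order_less_imp_not_eq2 top.not_eq_extremum)

lemma lam_nonneg: "0 \<le> lam"
  by (simp add: lam_def)

lemma lam_less_1: "lam < 1"
  using mean_less_1 by (simp add: nn_integral_eq_lam ennreal_less_iff lam_nonneg)

lemma mean_sums: "(\<lambda>v. real v * mu v) sums lam"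
  by (rule sums_mu_if_nn_integral_eq) (auto simp: nn_integral_eq_lam lam_nonneg)

lemma mu_0_pos: "0 < mu 0"
proof (rule ccontr)
  assume "\<not> 0 < mu 0"
  then have "mu v \<le> real v * mu v" for v
    using mu_nonneg[of v] mu_nonneg[of 0] by (cases v) (auto simp: mult_le_cancel_right1)
  then have "1 \<le> lam" by (rule sums_le[OF _ mu_sums mean_sums])
  then show False using lam_less_1 by simp
qed

lemma nn_integral_cum_arr: "(\<integral>\<^sup>+ w. ennreal (real (cum_arr a L w)) \<partial>M) = ennreal (real L * lam)"
proof -
  have "(\<integral>\<^sup>+ w. ennreal (real (cum_arr a L w)) \<partial>M) = (\<integral>\<^sup>+ w. (\<Sum>s<L. ennreal (real (a s w))) \<partial>M)"
    by (intro nn_integral_cong) (simp add: cum_arr_def)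
  also have "\<dots> = (\<Sum>s<L. \<integral>\<^sup>+ w. ennreal (real (a s w)) \<partial>M)"
    by (rule nn_integral_sum) auto
  also have "\<dots> = (\<Sum>s<L. ennreal lam)"
    by (intro sum.cong refl) (subst nn_integral_a_eq, rule nn_integral_eq_lam)
  also have "\<dots> = ennreal (real L * lam)"
    using lam_nonneg by (simp add: ennreal_mult ennreal_of_nat_eq_real_of_nat)
  finally show ?thesis .
qed

lemma markov_cum_arr: "1 - real L * lam / (real c + 1) \<le> prob {w \<in> space M. cum_arr a L w \<le> c}"
proof -
  let ?A = "{w \<in> space M. c < cum_arr a L w}"
  have "ennreal (real c + 1) * emeasure M ?A = (\<integral>\<^sup>+ w. ennreal (real c + 1) * indicator ?A w \<partial>M)"
    by (simp add: nn_integral_cmult_indicator)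
  also have "\<dots> \<le> (\<integral>\<^sup>+ w. ennreal (real (cum_arr a L w)) \<partial>M)"
  proof (rule nn_integral_mono)
    fix w
    show "ennreal (real c + 1) * indicator ?A w \<le> ennreal (real (cum_arr a L w))"
    proof (cases "w \<in> ?A")
      case True
      then have "ennreal (real c + 1) \<le> ennreal (real (cum_arr a L w))"
        by (intro ennreal_leI) auto
      then show ?thesis using True by (simp only: indicator_simps mult_1_right)
    qed simp
  qed
  also have "\<dots> = ennreal (real L * lam)"
    by (rule nn_integral_cum_arr)
  finally have "ennreal ((real c + 1) * prob ?A) \<le> ennreal (real L * lam)"
    by (simp add: emeasure_eq_measure ennreal_mult)
  then have "(real c + 1) * prob ?A \<le> real L * lam"
    using lam_nonneg by (subst (asm) ennreal_le_iff) auto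
  then have "prob ?A \<le> real L * lam / (real c + 1)"
    by (simp add: field_simps)
  moreover have "{w \<in> space M. cum_arr a L w \<le> c} = space M - ?A" by auto
  ultimately show ?thesis by (simp add: prob_compl)
qed

end

section \<open>Bursts force delayed packets\<close>

lemma cum_arr_add: "cum_arr a (u + m) w = cum_arr a u w + (\<Sum>i<m. a (u + i) w)"
  by (induction m) (simp_all add: cum_arr_def)

lemma cum_arr_mono: "s \<le> t \<Longrightarrow> cum_arr a s w \<le> cum_arr a t w"
  unfolding cum_arr_def by (rule sum_mono2) auto

lemma delay_ge_after_burst:
  assumes causal: "\<And>t j. r t w = Some j \<Longrightarrow> j < cum_arr a (Suc t) w"
    and m: "1 \<le> m" and burst: "m + k \<le> (\<Sum>i<m. a (u + i) w)"
  shows "delay_ge a r k (cum_arr a (u + m) w - 1) w"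
proof -
  let ?T = "cum_arr a (u + m) w" and ?q = "cum_arr a (u + m) w - 1" and ?c = "cum_arr a u w"
  have T: "?c + m + k \<le> ?T" using burst cum_arr_add[of a u m w] by simp
  have qT: "?q < ?T" using T m by simp
  have "Suc (u + m - 1) = u + m" using m by simp
  then have arr: "arr_slot a ?q w \<le> u + m - 1"
    unfolding arr_slot_def by (metis Least_le qT)
  show ?thesis
    unfolding delay_ge_def
  proof (intro allI impI notI)
    fix t assume t: "t < arr_slot a ?q w + k" and dec: "decoded_by r ?q t w"
    let ?J = "{?c..<?T}"
    have "\<exists>s. s \<le> t \<and> r s w = Some j" if "j \<in> ?J" for j
      using dec that qT unfolding decoded_by_def by (metis atLeastLessThan_iff less_Suc_eq_le Suc_pred' gr0I less_nat_zero_code)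
    then obtain f where f: "\<And>j. j \<in> ?J \<Longrightarrow> f j \<le> t \<and> r (f j) w = Some j"
      by metis
    have "inj_on f ?J"
      by (rule inj_onI) (metis f option.inject)
    moreover have "f ` ?J \<subseteq> {u..t}"
    proof
      fix s assume "s \<in> f ` ?J"
      then obtain j where j: "j \<in> ?J" "s = f j" by auto
      have "j < cum_arr a (Suc s) w" using causal f[OF j(1)] j(2) by auto
      then have "\<not> Suc s \<le> u" using j(1) cum_arr_mono[of "Suc s" u a w] by auto
      then show "s \<in> {u..t}" using f[OF j(1)] j(2) by auto
    qed
    ultimately have "card ?J \<le> card {u..t}" by (intro card_inj_on_le) auto
    then show False using T t arr m by simp
  qed
qed

lemma card_bursts_le_card_delayed:
  assumes causal: "\<And>t j. r t w = Some j \<Longrightarrow> j < cum_arr a (Suc t) w"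
    and burst: "\<And>l. l \<in> Ls \<Longrightarrow> \<exists>m. 1 \<le> m \<and> m \<le> n \<and> m + k \<le> (\<Sum>i<m. a (l * n + i) w)
                                     \<and> cum_arr a (l * n + m) w \<le> N"
  shows "card Ls \<le> card {q. q < N \<and> delay_ge a r k q w}"
proof -
  obtain m where m: "\<And>l. l \<in> Ls \<Longrightarrow> 1 \<le> m l \<and> m l \<le> n \<and> m l + k \<le> (\<Sum>i<m l. a (l * n + i) w)
                                      \<and> cum_arr a (l * n + m l) w \<le> N"
    using burst by metis
  define g where "g l = cum_arr a (l * n + m l) w - 1" for l
  have g: "delay_ge a r k (g l) w" "cum_arr a (l * n) w \<le> g l" "g l < cum_arr a (l * n + n) w"
    "g l < N" if "l \<in> Ls" for l
  proof -
    show "delay_ge a r k (g l) w"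
      unfolding g_def using m[OF that] by (intro delay_ge_after_burst[OF causal]) auto
    have "cum_arr a (l * n) w + 1 \<le> cum_arr a (l * n + m l) w"
      using cum_arr_add[of a "l * n" "m l" w] m[OF that] by linarith
    moreover have "cum_arr a (l * n + m l) w \<le> cum_arr a (l * n + n) w"
      using m[OF that] by (intro cum_arr_mono) simp
    ultimately show "cum_arr a (l * n) w \<le> g l" "g l < cum_arr a (l * n + n) w" "g l < N"
      using m[OF that] unfolding g_def by linarith+
  qed
  have "inj_on g Ls"
  proof (rule linorder_inj_onI')
    fix i j assume ij: "i \<in> Ls" "j \<in> Ls" "i < j"
    then have "i * n + n \<le> j * n"
      using mult_le_mono1[of "Suc i" j n] by simp
    then have "g i < g j"
      using g(2,3)[OF ij(1)] g(2)[OF ij(2)] cum_arr_mono[of "i * n + n" "j * n" a w] by linarith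
    then show "g i \<noteq> g j" by simp
  qed
  moreover have "g ` Ls \<subseteq> {q. q < N \<and> delay_ge a r k q w}" using g by auto
  ultimately show ?thesis by (rule card_inj_on_le) simp
qed

section \<open>From window probabilities to the long-run fraction\<close>

lemma (in prob_space) nn_integral_one_minus_eq:
  fixes g :: "'a \<Rightarrow> real"
  assumes g: "g \<in> borel_measurable M" "\<And>w. 0 \<le> g w" "\<And>w. g w \<le> 1"
  shows "(\<integral>\<^sup>+ w. ennreal (1 - g w) \<partial>M) = ennreal (1 - expectation g)"
proof -
  have int: "integrable M g"
    using g by (intro integrable_const_bound[where B = 1]) auto
  have "(\<integral>\<^sup>+ w. ennreal (1 - g w) \<partial>M) = ennreal (expectation (\<lambda>w. 1 - g w))"
    using int g by (intro nn_integral_eq_integral) auto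
  then show "(\<integral>\<^sup>+ w. ennreal (1 - g w) \<partial>M) = ennreal (1 - expectation g)"
    using int by (simp add: prob_space)
qed

text \<open>Fatou's lemma applied to 1 - g N.\<close>

lemma (in prob_space) lower_bound_le_AE_limit:
  fixes g fr :: "nat \<Rightarrow> 'a \<Rightarrow> real"
  assumes g: "\<And>N. g N \<in> borel_measurable M" "\<And>N w. 0 \<le> g N w" "\<And>N w. g N w \<le> 1"
    and g_le: "\<And>N w. w \<in> space M \<Longrightarrow> g N w \<le> fr N w"
    and lim: "AE w in M. (\<lambda>N. fr N w) \<longlonglongrightarrow> l"
    and ev: "eventually (\<lambda>N. \<beta> \<le> expectation (g N)) sequentially"
  shows "\<beta> \<le> l"
proof -
  have "expectation (g N) \<le> 1" for N
    using g by (auto intro!: prob_space.integral_le_const prob_space_axioms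
        integrable_const_bound[where B = 1])
  then have "\<beta> \<le> 1"
    using ev by (auto simp: eventually_sequentially intro: order.trans)
  have "(\<integral>\<^sup>+ w. liminf (\<lambda>N. ennreal (1 - g N w)) \<partial>M) \<le> liminf (\<lambda>N. \<integral>\<^sup>+ w. ennreal (1 - g N w) \<partial>M)"
    using g by (intro nn_integral_liminf) measurable
  also have "\<dots> \<le> liminf (\<lambda>N. ennreal (1 - \<beta>))"
    using ev by (intro Liminf_mono)
      (auto elim!: eventually_mono intro!: ennreal_leI simp: nn_integral_one_minus_eq[OF g])
  finally have up: "(\<integral>\<^sup>+ w. liminf (\<lambda>N. ennreal (1 - g N w)) \<partial>M) \<le> ennreal (1 - \<beta>)"
    by (simp add: Liminf_const)
  have "AE w in M. ennreal (1 - l) \<le> liminf (\<lambda>N. ennreal (1 - g N w))"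
    using lim
  proof (rule AE_mp, intro AE_I2 impI)
    fix w assume w: "w \<in> space M" and fr: "(\<lambda>N. fr N w) \<longlonglongrightarrow> l"
    have "ennreal (1 - l) = liminf (\<lambda>N. ennreal (1 - fr N w))"
      using fr by (intro lim_imp_Liminf[symmetric] tendsto_ennrealI tendsto_diff tendsto_const) simp_all
    also have "\<dots> \<le> liminf (\<lambda>N. ennreal (1 - g N w))"
      by (intro Liminf_mono always_eventually allI ennreal_leI) (use g_le[OF w] in auto)
    finally show "ennreal (1 - l) \<le> liminf (\<lambda>N. ennreal (1 - g N w))" .
  qed
  then have "(\<integral>\<^sup>+ w. ennreal (1 - l) \<partial>M) \<le> (\<integral>\<^sup>+ w. liminf (\<lambda>N. ennreal (1 - g N w)) \<partial>M)"
    by (rule nn_integral_mono_AE)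
  then have "ennreal (1 - l) \<le> ennreal (1 - \<beta>)"
    using up by (simp add: emeasure_space_1)
  then show ?thesis
    using \<open>\<beta> \<le> 1\<close> by simp
qed

text \<open>Each of the first N div (2 n) windows keeps the Markov factor above 1/3, and there are at
  least N / (4 n) of them.\<close>

lemma window_average_bound:
  fixes P0 lam :: real and q :: "nat \<Rightarrow> real"
  assumes n: "1 \<le> n" and N: "4 * n * (B + 1) \<le> N" and P0: "0 \<le> P0"
    and lam: "0 \<le> lam" "lam \<le> 1"
    and q: "\<And>l. l < N div (2 * n) \<Longrightarrow> (1 - real (l * n) * lam / (real (N - n * B) + 1)) * P0 \<le> q l"
  shows "P0 / (12 * real n) \<le> (\<Sum>l<N div (2 * n). q l) / real N"
proof -
  define L where "L = N div (2 * n)"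
  have nB: "4 * (n * B) \<le> N" and n4: "4 * n \<le> N" using N by (simp_all add: algebra_simps)
  have Npos: "0 < N" using n4 n by linarith
  have dm: "L * (2 * n) + N mod (2 * n) = N" and "N mod (2 * n) < 2 * n"
    using n unfolding L_def by (simp_all add: div_mult_mod_eq)
  then have L2: "2 * (L * n) \<le> N" and "N \<le> 4 * (L * n)"
    using n4 by (simp_all add: algebra_simps)
  then have L4: "real N \<le> 4 * (real L * real n)"
    by (metis of_nat_le_iff of_nat_mult of_nat_numeral)
  have cN: "3 * real N \<le> 4 * real (N - n * B) + 4"
    using nB of_nat_le_iff[of "4 * (n * B)" N, where 'a = real] by (simp add: of_nat_diff)
  have "P0 / 3 \<le> q l" if l: "l < L" for l
  proof -
    have "2 * (l * n) \<le> N"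
      using L2 mult_le_mono1[of l L n] l by linarith
    then have "2 * real (l * n) \<le> real N"
      by (metis of_nat_le_iff of_nat_mult of_nat_numeral)
    then have "real (l * n) * lam \<le> 2 / 3 * (real (N - n * B) + 1)"
      using cN lam mult_left_mono[of lam 1 "real (l * n)"] by simp
    then have "real (l * n) * lam / (real (N - n * B) + 1) \<le> 2 / 3"
      by (simp add: divide_le_eq)
    then have "1 / 3 * P0 \<le> (1 - real (l * n) * lam / (real (N - n * B) + 1)) * P0"
      using P0 by (intro mult_right_mono) auto
    then show ?thesis using q[OF l[unfolded L_def]] by linarith
  qed
  then have S: "real L * (P0 / 3) \<le> (\<Sum>l<L. q l)"
    using sum_mono[of "{..<L}" "\<lambda>_. P0 / 3" q] by simp
  have "P0 / (12 * real n) * real N \<le> P0 / (12 * real n) * (4 * (real L * real n))"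
    using L4 P0 n by (intro mult_left_mono) auto
  also have "\<dots> = real L * (P0 / 3)" using n by (simp add: field_simps)
  finally show ?thesis
    using S Npos unfolding L_def[symmetric] by (simp add: pos_le_divide_eq)
qed

lemma sum_indicator_eq_card:
  "finite A \<Longrightarrow> (\<Sum>l\<in>A. indicator (S l) w :: real) = real (card {l\<in>A. w \<in> S l})"
  by (induction A rule: finite_induct)
    (auto simp: indicator_def insert_compr[symmetric] Collect_conj_eq card_insert_if)

context stable_arrivals
begin

text \<open>Window l consists of slots l n, ..., l n + n - 1. The event: at most N - n B packets arrive
  before the window, and inside it the walk reaches level k with every arrival at most B.\<close>

definition burst_event :: "nat \<Rightarrow> nat \<Rightarrow> nat \<Rightarrow> nat \<Rightarrow> nat \<Rightarrow> 'w set" where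
  "burst_event n B k N l = (\<Union>(y, x)\<in>lists_sum_le (l * n) (N - n * B) \<times> passage_paths B (int k) n 0.
     cylinder (y @ x))"

definition window_fraction :: "nat \<Rightarrow> nat \<Rightarrow> nat \<Rightarrow> nat \<Rightarrow> 'w \<Rightarrow> real" where
  "window_fraction n B k N w = (if 4 * n * (B + 1) \<le> N
     then (\<Sum>l<N div (2 * n). indicator (burst_event n B k N l) w) / real N else 0)"

lemma sets_burst_event[measurable]: "burst_event n B k N l \<in> sets M"
  unfolding burst_event_def using finite_lists_sum_le finite_passage_paths
  by (intro sets.finite_UN) auto

lemma prob_burst_event: "prob (burst_event n B k N l) =
    prob {w \<in> space M. cum_arr a (l * n) w \<le> N - n * B} * passage_prob mu B (int k) n 0"
  unfolding burst_event_def prob_cum_arr_le passage_prob_eq_sum_paths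
  by (rule prob_Union_cylinder_append[where k = "int k" and s = 0])
    (use finite_lists_sum_le finite_passage_paths in \<open>auto simp: lists_sum_le_def passage_paths_def\<close>)

lemma burst_event_burst:
  assumes w: "w \<in> burst_event n B k N l" and NB: "n * B \<le> N"
  shows "\<exists>m\<ge>1. m \<le> n \<and> m + k \<le> (\<Sum>i<m. a (l * n + i) w) \<and> cum_arr a (l * n + m) w \<le> N"
proof -
  obtain y x where y: "y \<in> lists_sum_le (l * n) (N - n * B)" and x: "x \<in> passage_paths B (int k) n 0"
    and w: "w \<in> cylinder (y @ x)"
    using w unfolding burst_event_def by auto
  have fp: "first_passage (int k) 0 x" and xB: "set x \<subseteq> {..B}" and xn: "length x \<le> n"
    using x by (auto simp: passage_paths_def)
  have ly: "length y = l * n" and sy: "sum_list y \<le> N - n * B"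
    using y by (auto simp: lists_sum_le_def)
  have m1: "1 \<le> length x" using fp by (cases x) auto
  have mk: "length x + k \<le> sum_list x" using first_passage_level[OF fp] by linarith
  have sx: "(\<Sum>i<length x. a (l * n + i) w) = sum_list x"
    using w ly by (auto simp: cylinder_def nth_append sum_list_sum_nth atLeast0LessThan
        intro!: sum.cong)
  have "sum_list x \<le> length x * B"
    using xB by (induction x) auto
  then have "sum_list x \<le> n * B"
    using xn mult_le_mono1 order.trans by blast
  then have "cum_arr a (l * n + length x) w \<le> N"
    using cum_arr_cylinder[OF w] ly sy NB by simp
  then show ?thesis using m1 mk sx xn by (intro exI[of _ "length x"]) simp
qed

lemma window_fraction_le_delay_fraction:
  assumes causal: "\<And>t j. r t w = Some j \<Longrightarrow> j < cum_arr a (Suc t) w"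
  shows "window_fraction n B k N w \<le> real (card {q. q < N \<and> delay_ge a r k q w}) / real N"
proof (cases "4 * n * (B + 1) \<le> N")
  case True
  then have NB: "n * B \<le> N" by (simp add: algebra_simps)
  have "card {l \<in> {..<N div (2 * n)}. w \<in> burst_event n B k N l} \<le> card {q. q < N \<and> delay_ge a r k q w}"
    using burst_event_burst[OF _ NB] by (intro card_bursts_le_card_delayed[OF causal]) auto
  then show ?thesis
    using True by (simp add: window_fraction_def sum_indicator_eq_card divide_right_mono)
qed (simp add: window_fraction_def)

lemma window_fraction_bounds: "0 \<le> window_fraction n B k N w" "window_fraction n B k N w \<le> 1"
proof -
  have "(\<Sum>l<N div (2 * n). indicator (burst_event n B k N l) w :: real) \<le> (\<Sum>l<N div (2 * n). 1)"
    by (intro sum_mono) (auto simp: indicator_def)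
  also have "\<dots> = real (N div (2 * n))" by simp
  also have "\<dots> \<le> real N" by simp
  finally show "0 \<le> window_fraction n B k N w" "window_fraction n B k N w \<le> 1"
    by (auto simp: window_fraction_def divide_le_eq_1 intro!: sum_nonneg divide_nonneg_nonneg)
qed

lemma expectation_window_fraction:
  assumes "4 * n * (B + 1) \<le> N"
  shows "expectation (window_fraction n B k N) = (\<Sum>l<N div (2 * n). prob (burst_event n B k N l)) / real N"
proof -
  have "window_fraction n B k N = (\<lambda>w. (\<Sum>l<N div (2 * n). indicator (burst_event n B k N l) w) / real N)"
    using assms by (simp add: fun_eq_iff window_fraction_def)
  then show ?thesis
    by (simp add: integral_sum integrable_real_indicator emeasure_eq_measure)
qed

lemma expectation_window_fraction_ge:
  assumes n: "1 \<le> n" and N: "4 * n * (B + 1) \<le> N"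
  shows "passage_prob mu B (int k) n 0 / (12 * real n) \<le> expectation (window_fraction n B k N)"
  unfolding expectation_window_fraction[OF N]
  using n N passage_prob_nonneg[OF mu_nonneg] lam_nonneg less_imp_le[OF lam_less_1]
proof (rule window_average_bound)
  fix l
  show "(1 - real (l * n) * lam / (real (N - n * B) + 1)) * passage_prob mu B (int k) n 0
      \<le> prob (burst_event n B k N l)"
    unfolding prob_burst_event
    by (intro mult_right_mono markov_cum_arr passage_prob_nonneg mu_nonneg)
qed

end

locale delay_system = stable_arrivals M a for M :: "'w measure" and a +
  fixes r :: "nat \<Rightarrow> 'w \<Rightarrow> nat option" and p :: "nat \<Rightarrow> real"
  assumes causal: "\<And>t w j. w \<in> space M \<Longrightarrow> r t w = Some j \<Longrightarrow> j < cum_arr a (Suc t) w"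
    and delay_fraction_tendsto: "\<And>k. AE w in M.
        (\<lambda>N. real (card {n. n < N \<and> delay_ge a r k n w}) / real N) \<longlonglongrightarrow> p k"
begin

lemma passage_prob_le_delay_prob:
  assumes n: "1 \<le> n"
  shows "passage_prob mu B (int k) n 0 / (12 * real n) \<le> p k"
proof (rule lower_bound_le_AE_limit[where g = "\<lambda>N. window_fraction n B k N"
      and fr = "\<lambda>N w. real (card {q. q < N \<and> delay_ge a r k q w}) / real N"])
  show "window_fraction n B k N \<in> borel_measurable M" for N
    unfolding window_fraction_def by measurable
  show "eventually (\<lambda>N. passage_prob mu B (int k) n 0 / (12 * real n)
      \<le> expectation (window_fraction n B k N)) sequentially"
    unfolding eventually_sequentially using expectation_window_fraction_ge[OF n] by blast
qed (use window_fraction_bounds window_fraction_le_delay_fraction causal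
       delay_fraction_tendsto in auto)

end

section \<open>Exponential moments\<close>

text \<open>Strict convexity of th \<mapsto> exp (th y), with the chord taken between 0 and th.\<close>

lemma exp_chord_bound:
  fixes th th1 y :: real
  assumes th: "0 < th1" "th1 < th"
  shows "th / th1 * exp (th1 * y) - (th - th1) / th1 \<le> exp (th * y)"
    and "y \<noteq> 0 \<Longrightarrow> th / th1 * exp (th1 * y) - (th - th1) / th1 < exp (th * y)"
proof -
  define E where "E = exp (th1 * y)"
  have E: "0 < E" by (simp add: E_def)
  have "E * (1 - th1 * y) \<le> E * exp (- (th1 * y))"
    using E by (intro mult_left_mono) (auto simp: exp_minus_ge)
  then have "E - 1 \<le> E * th1 * y" by (simp add: E_def algebra_simps flip: exp_add)
  then have "(th - th1) * (E - 1) \<le> (th - th1) * (E * th1 * y)"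
    using th by (intro mult_left_mono) auto
  then have chord: "th / th1 * E - (th - th1) / th1 \<le> E * (1 + (th - th1) * y)"
    using th by (simp add: field_simps)
  have split: "exp (th * y) = E * exp ((th - th1) * y)"
    by (simp add: E_def algebra_simps flip: exp_add)
  have "E * (1 + (th - th1) * y) \<le> exp (th * y)"
    unfolding split using E by (intro mult_left_mono) auto
  with chord show "th / th1 * exp (th1 * y) - (th - th1) / th1 \<le> exp (th * y)"
    by (simp add: E_def)
  assume "y \<noteq> 0"
  then have "1 + (th - th1) * y < exp ((th - th1) * y)"
    using th exp_minus_greater[of "- ((th - th1) * y)"] by simp
  then have "E * (1 + (th - th1) * y) < exp (th * y)"
    unfolding split using E by (intro mult_strict_left_mono)
  with chord show "th / th1 * exp (th1 * y) - (th - th1) / th1 < exp (th * y)"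
    by (simp add: E_def)
qed

text \<open>The truncated walk has negative drift, so its exponential moment decreases near 0.\<close>

lemma truncated_mgf_less_1:
  fixes mu :: "nat \<Rightarrow> real"
  assumes th: "0 < th"
    and drift: "(\<Sum>v\<le>B. real v * mu v) < (\<Sum>v\<le>B. mu v)" and total: "(\<Sum>v\<le>B. mu v) \<le> 1"
  shows "\<exists>t. 0 < t \<and> t \<le> th \<and> (\<Sum>v\<le>B. mu v * exp (t * (real v - 1))) < 1"
proof -
  let ?f = "\<lambda>t. \<Sum>v\<le>B. mu v * exp (t * (real v - 1))"
  have deriv: "DERIV ?f 0 :> (\<Sum>v\<le>B. mu v * (real v - 1))"
    by (auto intro!: derivative_eq_intros sum.cong)
  have "(\<Sum>v\<le>B. mu v * (real v - 1)) < 0"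
    using drift by (simp add: algebra_simps sum_subtractf)
  then obtain d where d: "0 < d" "\<forall>h>0. h < d \<longrightarrow> ?f (0 + h) < ?f 0"
    using DERIV_neg_dec_right[OF deriv] by blast
  define t where "t = min th (d / 2)"
  have "?f (0 + t) < ?f 0"
    using d th by (auto simp: t_def)
  also have "?f 0 \<le> 1"
    using total by simp
  finally show ?thesis
    using th d by (intro exI[of _ t]) (auto simp: t_def)
qed

context iid_arrivals
begin

definition mgf :: "real \<Rightarrow> ennreal" where
  "mgf th = (\<integral>\<^sup>+ w. ennreal (exp (th * real (a 0 w))) \<partial>M)"

lemma mgf_eq_suminf: "mgf th = (\<Sum>v. ennreal (exp (th * real v) * mu v))"
  unfolding mgf_def by (rule nn_integral_eq_suminf_mu) simp

lemma mgf_mono: "0 \<le> th \<Longrightarrow> th \<le> th' \<Longrightarrow> mgf th \<le> mgf th'"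
  unfolding mgf_def by (intro nn_integral_mono ennreal_leI) (simp add: mult_right_mono)

lemma shifted_mgf_sums:
  assumes "mgf th \<noteq> \<top>"
  shows "(\<lambda>v. exp (th * (real v - 1)) * mu v) sums (exp (- th) * enn2real (mgf th))"
proof -
  have "(\<lambda>v. exp (th * real v) * mu v) sums enn2real (mgf th)"
    using assms by (intro sums_mu_if_nn_integral_eq) (auto simp: mgf_def[symmetric] less_top)
  moreover have "(\<lambda>v. exp (- th) * (exp (th * real v) * mu v)) = (\<lambda>v. exp (th * (real v - 1)) * mu v)"
    by (simp add: fun_eq_iff algebra_simps flip: exp_add)
  ultimately show ?thesis
    using sums_mult[of _ "enn2real (mgf th)" "exp (- th)"] by metis
qed

end

context stable_arrivals
begin

text \<open>The map th \<mapsto> E exp(th (a - 1)) is convex with value 1 at 0, and strictly convex because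
  a puts mass on 0 (mu 0 > 0 as lambda < 1).\<close>

lemma mgf_strict_growth:
  assumes th: "0 < th1" "th1 < th" and ge: "ennreal (exp th1) \<le> mgf th1"
  shows "ennreal (exp th) < mgf th"
proof (cases "mgf th = \<top>")
  case False
  define m where "m t = exp (- t) * enn2real (mgf t)" for t
  have fin1: "mgf th1 \<noteq> \<top>"
    using False mgf_mono[of th1 th] th by (auto simp: top_unique)
  have "exp th1 \<le> enn2real (mgf th1)"
    using enn2real_mono[OF ge] fin1 by (simp add: less_top)
  then have m1: "1 \<le> m th1" by (simp add: m_def exp_minus field_simps)
  let ?d = "\<lambda>v. exp (th * (real v - 1)) * mu v
              - (th / th1 * (exp (th1 * (real v - 1)) * mu v) - (th - th1) / th1 * mu v)"
  have d_sums: "?d sums (m th - (th / th1 * m th1 - (th - th1) / th1 * 1))"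
    unfolding m_def using False fin1
    by (intro sums_diff sums_mult shifted_mgf_sums mu_sums)
  have d_eq: "?d v = mu v * (exp (th * (real v - 1))
      - (th / th1 * exp (th1 * (real v - 1)) - (th - th1) / th1))" for v
    by (simp add: algebra_simps)
  have "0 \<le> ?d v" for v
    unfolding d_eq using exp_chord_bound(1)[OF th, of "real v - 1"] mu_nonneg[of v] by simp
  moreover have "0 < ?d 0"
    unfolding d_eq using exp_chord_bound(2)[OF th, of "- 1"] mu_0_pos by (intro mult_pos_pos) auto
  ultimately have "0 < suminf ?d"
    by (rule suminf_pos2[OF sums_summable[OF d_sums]])
  then have "0 < m th - (th / th1 * m th1 - (th - th1) / th1)"
    using sums_unique[OF d_sums] by simp
  moreover have "th / th1 * 1 \<le> th / th1 * m th1"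
    using m1 th by (intro mult_left_mono) auto
  moreover have "th / th1 - (th - th1) / th1 = 1"
    using th by (simp add: field_simps)
  ultimately have "1 < m th"
    by linarith
  then have "exp th < enn2real (mgf th)"
    by (simp add: m_def exp_minus field_simps)
  then show ?thesis
    using False ennreal_less_iff[of "exp th" "enn2real (mgf th)"]
    by (simp add: less_top ennreal_enn2real)
qed simp

end

lemma survival_moment_le_half:
  assumes mu: "\<And>v. 0 \<le> mu v" and th: "0 < th'" "th' \<le> th"
    and contract: "(\<Sum>v\<le>B. mu v * exp (th' * (real v - 1))) ^ N0 \<le> exp (- th) / 2"
    and k: "1 \<le> k"
  shows "survival_moment mu B (int k) th (N0 * (k + 1)) 0 \<le> 1 / 2"
proof -
  let ?p = "\<Sum>v\<le>B. mu v * exp (th' * (real v - 1))" and ?e = "exp (- th)"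
  have e: "?e \<le> 1" using th by simp
  have "?p ^ (N0 * (k + 1)) = (?p ^ N0) ^ (k + 1)" by (rule power_mult)
  also have "\<dots> \<le> (?e / 2) ^ (k + 1)"
    using mu by (intro power_mono[OF contract] zero_le_power sum_nonneg) auto
  also have "\<dots> = (?e / 2) ^ k * (?e / 2)"
    by simp
  also have "\<dots> \<le> ?e ^ k * (1 / 2)"
    using e by (intro mult_mono power_mono) auto
  finally have "exp ((th - th') * k) * ?p ^ (N0 * (k + 1)) \<le> exp ((th - th') * k) * (?e ^ k / 2)"
    by (intro mult_left_mono) simp_all
  also have "\<dots> = exp (- th' * k) / 2"
    by (simp add: algebra_simps flip: exp_of_nat_mult exp_add)
  also have "\<dots> \<le> 1 / 2"
    using th by simp
  finally show ?thesis
    using survival_moment_le[where mu = mu and B = B and s = 0 and k = "int k"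
        and n = "N0 * (k + 1)", OF mu _ th(2)] th k by simp
qed

lemma passage_prob_lower_bound:
  assumes mu: "\<And>v. 0 \<le> mu v" and th: "0 < th'" "th' \<le> th"
    and submart: "1 \<le> (\<Sum>v\<le>B. mu v * exp (th * (real v - 1)))"
    and contract: "(\<Sum>v\<le>B. mu v * exp (th' * (real v - 1))) ^ N0 \<le> exp (- th) / 2"
    and k: "1 \<le> k"
  shows "exp (- th * (real k + real B)) / 2 \<le> passage_prob mu B (int k) (N0 * (k + 1)) 0"
proof -
  let ?n = "N0 * (k + 1)" and ?x = "exp (- th * (real k + real B))"
  define E where "E = exp (th * (real k + real B))"
  have "1 \<le> E * passage_prob mu B (int k) ?n 0 + survival_moment mu B (int k) th ?n 0"
    using exp_le_passage_prob_plus_survival_moment[where mu = mu and B = B and s = 0 and k = "int k"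
        and n = ?n, OF mu _ submart] th k by (simp add: E_def)
  then have P: "1 \<le> E * passage_prob mu B (int k) ?n 0 * 2"
    using survival_moment_le_half[OF mu th contract k] by linarith
  have "?x / 2 \<le> ?x * (E * passage_prob mu B (int k) ?n 0 * 2) / 2"
    using P by (intro divide_right_mono mult_left_mono) simp_all
  also have "\<dots> = (?x * E) * passage_prob mu B (int k) ?n 0"
    by simp
  also have "?x * E = 1"
    by (simp add: E_def flip: exp_add)
  finally show ?thesis by simp
qed

context stable_arrivals
begin

lemma eventually_truncated_shifted_mgf_ge_1:
  assumes strict: "ennreal (exp th) < mgf th"
  shows "eventually (\<lambda>B. 1 \<le> (\<Sum>v\<le>B. mu v * exp (th * (real v - 1)))) sequentially"
proof -
  let ?g = "\<lambda>v. exp (th * real v) * mu v"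
  obtain B0 where "ennreal (exp th) < (\<Sum>v<B0. ennreal (?g v))"
    using strict unfolding mgf_eq_suminf suminf_eq_SUP by (auto simp: less_SUP_iff)
  then have B0: "exp th < (\<Sum>v<B0. ?g v)"
    by (simp add: sum_ennreal mu_nonneg ennreal_less_iff)
  have "1 \<le> (\<Sum>v\<le>B. mu v * exp (th * (real v - 1)))" if "B0 \<le> B" for B
  proof -
    have "(\<Sum>v<B0. ?g v) \<le> (\<Sum>v\<le>B. ?g v)"
      using that by (intro sum_mono2) (auto simp: mu_nonneg)
    then have "exp (- th) * exp th \<le> exp (- th) * (\<Sum>v\<le>B. ?g v)"
      using B0 by simp
    also have "\<dots> = (\<Sum>v\<le>B. mu v * exp (th * (real v - 1)))"
      unfolding sum_distrib_left by (intro sum.cong refl) (simp add: algebra_simps flip: exp_add)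
    finally show ?thesis
      by (simp flip: exp_add)
  qed
  then show ?thesis
    unfolding eventually_sequentially by blast
qed

lemma eventually_lam_less_truncated_mass:
  "eventually (\<lambda>B. lam < (\<Sum>v\<le>B. mu v)) sequentially"
proof -
  have "(\<lambda>B. \<Sum>v<Suc B. mu v) \<longlonglongrightarrow> 1"
    using LIMSEQ_Suc[OF mu_sums[unfolded sums_def]] .
  from order_tendstoD(1)[OF this lam_less_1] show ?thesis
    by (simp only: lessThan_Suc_atMost)
qed

lemma truncation_parameters:
  assumes th: "0 < th" and strict: "ennreal (exp th) < mgf th"
  obtains B th' N0 where "0 < th'" "th' \<le> th" "1 \<le> N0"
    "1 \<le> (\<Sum>v\<le>B. mu v * exp (th * (real v - 1)))"
    "(\<Sum>v\<le>B. mu v * exp (th' * (real v - 1))) ^ N0 \<le> exp (- th) / 2"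
proof -
  obtain B where submart: "1 \<le> (\<Sum>v\<le>B. mu v * exp (th * (real v - 1)))"
    and mass: "lam < (\<Sum>v\<le>B. mu v)"
    using eventually_conj[OF eventually_truncated_shifted_mgf_ge_1[OF strict]
        eventually_lam_less_truncated_mass]
    unfolding eventually_sequentially by blast
  have "(\<Sum>v\<le>B. real v * mu v) \<le> lam"
    using sum_le_suminf[OF sums_summable[OF mean_sums], of "{..B}"] sums_unique[OF mean_sums]
    by (simp add: mu_nonneg)
  with mass have drift: "(\<Sum>v\<le>B. real v * mu v) < (\<Sum>v\<le>B. mu v)" by simp
  have "(\<Sum>v\<le>B. mu v) \<le> 1"
    using sum_le_suminf[OF sums_summable[OF mu_sums], of "{..B}"] sums_unique[OF mu_sums]
    by (simp add: mu_nonneg)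
  then obtain t where t: "0 < t" "t \<le> th" "(\<Sum>v\<le>B. mu v * exp (t * (real v - 1))) < 1"
    using truncated_mgf_less_1[OF th drift] by blast
  then obtain N0 where N0: "(\<Sum>v\<le>B. mu v * exp (t * (real v - 1))) ^ N0 < exp (- th) / 2"
    using real_arch_pow_inv[OF _ t(3), of "exp (- th) / 2"] by auto
  moreover have "N0 \<noteq> 0"
  proof
    assume "N0 = 0"
    then have "1 < exp (- th) / 2" using N0 by simp
    moreover have "exp (- th) \<le> 1" using th by simp
    ultimately show False by simp
  qed
  ultimately show ?thesis
    using that[of t N0 B] t submart by simp
qed

end

lemma decay_bound_tendsto:
  "0 < c \<Longrightarrow> (\<lambda>k::nat. (th * (real k + real B) + ln (c * (real k + 1))) / real k) \<longlonglongrightarrow> th"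
  by real_asymp

context delay_system
begin

lemma delay_prob_lower_bound:
  assumes th: "0 < th'" "th' \<le> th" and N0: "1 \<le> N0"
    and submart: "1 \<le> (\<Sum>v\<le>B. mu v * exp (th * (real v - 1)))"
    and contract: "(\<Sum>v\<le>B. mu v * exp (th' * (real v - 1))) ^ N0 \<le> exp (- th) / 2"
    and k: "1 \<le> k"
  shows "exp (- th * (real k + real B)) / (24 * real N0 * (real k + 1)) \<le> p k"
proof -
  have "exp (- th * (real k + real B)) / 2 / (12 * real (N0 * (k + 1)))
      \<le> passage_prob mu B (int k) (N0 * (k + 1)) 0 / (12 * real (N0 * (k + 1)))"
    by (intro divide_right_mono passage_prob_lower_bound[OF mu_nonneg th submart contract k]) simp
  also have "\<dots> \<le> p k"
    using N0 by (intro passage_prob_le_delay_prob) simp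
  finally show ?thesis by (simp add: field_simps)
qed

lemma limsup_decay_le:
  assumes th: "0 < th" and strict: "ennreal (exp th) < mgf th"
  shows "limsup (\<lambda>k. decay (p k) k) \<le> ereal th"
proof -
  obtain B th' N0 where par: "0 < th'" "th' \<le> th" "1 \<le> N0"
    "1 \<le> (\<Sum>v\<le>B. mu v * exp (th * (real v - 1)))"
    "(\<Sum>v\<le>B. mu v * exp (th' * (real v - 1))) ^ N0 \<le> exp (- th) / 2"
    using truncation_parameters[OF th strict] by blast
  define b where "b k = (th * (real k + real B) + ln (24 * real N0 * (real k + 1))) / real k" for k
  have "decay (p k) k \<le> ereal (b k)" if k: "1 \<le> k" for k
  proof -
    let ?L = "exp (- th * (real k + real B)) / (24 * real N0 * (real k + 1))"
    have L: "0 < ?L" "?L \<le> p k"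
      using par(3) delay_prob_lower_bound[OF par(1,2,3,4,5) k] by simp_all
    moreover have "ln ?L = - th * (real k + real B) - ln (24 * real N0 * (real k + 1))"
      using par(3) by (simp add: ln_div)
    ultimately have "- ln (p k) \<le> th * (real k + real B) + ln (24 * real N0 * (real k + 1))"
      using ln_le_cancel_iff[of ?L "p k"] by simp
    then have "- ln (p k) / real k \<le> b k"
      unfolding b_def by (rule divide_right_mono) simp
    then show ?thesis
      using L by (simp add: decay_def)
  qed
  then have "limsup (\<lambda>k. decay (p k) k) \<le> limsup (\<lambda>k. ereal (b k))"
    by (intro Limsup_mono) (auto simp: eventually_sequentially)
  also have "\<dots> = ereal th"
    unfolding b_def using par(3)
    by (intro lim_imp_Limsup tendsto_ereal decay_bound_tendsto) simp_all
  finally show ?thesis .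
qed

end

definition exponent_set :: "'w measure \<Rightarrow> ('w \<Rightarrow> nat) \<Rightarrow> ereal set" where
  "exponent_set M X = {0} \<union> {ereal \<theta> | \<theta>. \<theta> > 0 \<and>
     ereal_ln (\<integral>\<^sup>+ w. ennreal (exp (\<theta> * real (X w))) \<partial>M) < ereal \<theta>}"

lemma ereal_ln_less_iff: "ereal_ln x < ereal th \<longleftrightarrow> x < ennreal (exp th)"
proof (cases "x = \<infinity>")
  case True then show ?thesis by (simp add: ereal_ln_def)
next
  case False
  show ?thesis
  proof (cases "x = 0")
    case True then show ?thesis by (simp add: ereal_ln_def)
  next
    case x0: False
    have xr: "x = ennreal (enn2real x)" using False by (simp add: less_top)
    have pos: "0 < enn2real x" using False x0 by (simp add: enn2real_positive_iff less_top zero_less_iff_neq_zero)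
    have "ereal_ln x < ereal th \<longleftrightarrow> ln (enn2real x) < th" using False x0 by (simp add: ereal_ln_def)
    also have "\<dots> \<longleftrightarrow> ln (enn2real x) < ln (exp th)" by simp
    also have "\<dots> \<longleftrightarrow> enn2real x < exp th" using pos by (rule ln_less_cancel_iff) simp
    also have "\<dots> \<longleftrightarrow> x < ennreal (exp th)" using pos by (subst xr) (simp add: ennreal_less_iff)
    finally show ?thesis .
  qed
qed

lemma (in prob_space) exponent_less_minus_ln_tail:
  assumes X: "X \<in> measurable M (count_space UNIV)" and th: "0 < th"
    and mgf: "(\<integral>\<^sup>+ w. ennreal (exp (th * real (X w))) \<partial>M) < ennreal (exp th)"
    and P: "0 < prob {w \<in> space M. X w > 1}"
  shows "th < - ln (prob {w \<in> space M. X w > 1})"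
proof -
  let ?A = "{w \<in> space M. X w > 1}"
  have "?A \<in> sets M" using X by measurable
  then have "ennreal (exp (2 * th) * prob ?A) = (\<integral>\<^sup>+ w. ennreal (exp (2 * th)) * indicator ?A w \<partial>M)"
    by (simp add: nn_integral_cmult_indicator emeasure_eq_measure ennreal_mult)
  also have "\<dots> \<le> (\<integral>\<^sup>+ w. ennreal (exp (th * real (X w))) \<partial>M)"
  proof (rule nn_integral_mono)
    fix w
    have "w \<in> ?A \<Longrightarrow> 2 * th \<le> th * real (X w)"
      using th by (simp add: mult.commute mult_right_mono)
    then show "ennreal (exp (2 * th)) * indicator ?A w \<le> ennreal (exp (th * real (X w)))"
      by (cases "w \<in> ?A") (simp_all add: ennreal_leI)
  qed
  also note mgf
  finally have "exp (2 * th) * prob ?A < exp th"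
    by (simp add: ennreal_less_iff)
  moreover have "exp (2 * th) = exp th * exp th"
    by (simp flip: exp_add)
  ultimately have "exp th * (exp th * prob ?A) < exp th * 1"
    by (metis mult.assoc mult_1_right)
  then have "exp th * prob ?A < 1"
    by (rule mult_left_less_imp_less) simp
  then have "ln (exp th * prob ?A) < 0"
    using P by simp
  then show ?thesis
    using P by (simp add: ln_mult)
qed

lemma (in prob_space) Sup_exponent_set_less_infinity:
  assumes X: "X \<in> measurable M (count_space UNIV)" and P: "0 < prob {w \<in> space M. X w > 1}"
  shows "Sup (exponent_set M X) < \<infinity>"
proof -
  define b where "b = max 0 (- ln (prob {w \<in> space M. X w > 1}))"
  have "x \<le> ereal b" if "x \<in> exponent_set M X" for x
    using that exponent_less_minus_ln_tail[OF X _ _ P]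
    by (auto simp: b_def exponent_set_def ereal_ln_less_iff le_max_iff_disj less_imp_le)
  then have "Sup (exponent_set M X) \<le> ereal b"
    by (rule Sup_least)
  then show ?thesis
    by (rule le_less_trans) simp
qed

context delay_system
begin

lemma limsup_decay_le_Sup_exponent_set:
  "limsup (\<lambda>k. decay (p k) k) \<le> Sup (exponent_set M (a 0))"
proof -
  define S where "S = Sup (exponent_set M (a 0))"
  have mem: "ereal th \<in> exponent_set M (a 0) \<longleftrightarrow> mgf th < ennreal (exp th)" if "0 < th" for th
    using that by (auto simp: exponent_set_def ereal_ln_less_iff mgf_def)
  have "0 \<le> S" unfolding S_def exponent_set_def by (rule Sup_upper) simp
  have "limsup (\<lambda>k. decay (p k) k) \<le> S"
  proof (cases S)
    case (real s)
    have s: "0 \<le> s" using \<open>0 \<le> S\<close> real by simp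
    have "limsup (\<lambda>k. decay (p k) k) \<le> ereal s + ereal e" if e: "0 < e" for e
    proof -
      have "ereal (s + e / 2) \<notin> exponent_set M (a 0)"
      proof
        assume "ereal (s + e / 2) \<in> exponent_set M (a 0)"
        then have "ereal (s + e / 2) \<le> S" unfolding S_def by (rule Sup_upper)
        then show False using real e by simp
      qed
      then have "ennreal (exp (s + e / 2)) \<le> mgf (s + e / 2)"
        using mem[of "s + e / 2"] s e by (simp add: not_less)
      then have "ennreal (exp (s + e)) < mgf (s + e)"
        using s e by (intro mgf_strict_growth[of "s + e / 2"]) auto
      then have "limsup (\<lambda>k. decay (p k) k) \<le> ereal (s + e)"
        using s e by (intro limsup_decay_le) simp_all
      then show ?thesis by simp
    qed
    then show ?thesis
      unfolding real by (rule ereal_le_epsilon2)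
  qed (use \<open>0 \<le> S\<close> in simp_all)
  then show ?thesis unfolding S_def .
qed

end

theorem theorem6:
  fixes M :: "'w measure"
    and a :: "nat \<Rightarrow> 'w \<Rightarrow> nat"
    and r :: "nat \<Rightarrow> 'w \<Rightarrow> nat option"
    and p :: "nat \<Rightarrow> real"
  assumes "prob_space M"
    and meas: "\<And>t. a t \<in> measurable M (count_space UNIV)"
    and indep: "prob_space.indep_vars M (\<lambda>_. count_space UNIV) a UNIV"
    and ident: "\<And>t. distr M (count_space UNIV) (a t) = distr M (count_space UNIV) (a 0)"
    and mean: "(\<integral>\<^sup>+ w. ennreal (real (a 0 w)) \<partial>M) < 1"
    and causal: "\<And>t w j. w \<in> space M \<Longrightarrow> r t w = Some j \<Longrightarrow> j < cum_arr a (Suc t) w"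
    and frac: "\<And>k. AE w in M.
        (\<lambda>N. real (card {n. n < N \<and> delay_ge a r k n w}) / real N) \<longlonglongrightarrow> p k"
  shows "limsup (\<lambda>k. decay (p k) k) \<le>
           Sup ({0} \<union> {ereal \<theta> | \<theta>. \<theta> > 0 \<and>
                 ereal_ln (\<integral>\<^sup>+ w. ennreal (exp (\<theta> * real (a 0 w))) \<partial>M) < ereal \<theta>})
       \<and> (prob_space.prob M {w \<in> space M. a 0 w > 1} > 0 \<longrightarrow>
           Sup ({0} \<union> {ereal \<theta> | \<theta>. \<theta> > 0 \<and>
                 ereal_ln (\<integral>\<^sup>+ w. ennreal (exp (\<theta> * real (a 0 w))) \<partial>M) < ereal \<theta>}) < \<infinity>)"
proof -
  interpret delay_system M a r p
    by (intro delay_system.intro stable_arrivals.intro iid_arrivals.intro assms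
        delay_system_axioms.intro stable_arrivals_axioms.intro iid_arrivals_axioms.intro)
  show ?thesis
    using limsup_decay_le_Sup_exponent_set Sup_exponent_set_less_infinity[OF measurable_a]
    unfolding exponent_set_def by blast
qed

end
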